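(* Let $(\mathcal S,\mathcal C,\mathcal R,\mathcal K)$ be a deterministic reaction network system with species $X_1,\dots,X_d$, modeled by $\frac{d}{dt}x(t)=f(x(t))$, and let $PS=\{x\in\mathbb R^d_{>0}: f(x)=0\}$. Let $\theta,\mu>0$ and suppose there exists $x^*\in PS$ with $x^*_1=\mu/\theta$. Then the basic ACR network system $Z+X_1\xrightarrow{\theta}2Z$, $Z\xrightarrow{\mu}X_1$ (with mass-action kinetics, $Z$ a new species not in the given network) is a mass-action ACR controller for $(\mathcal S,\mathcal C,\mathcal R,\mathcal K)$, and the controlled system admits a positive steady state.
   Context: The basic ACR network system with mass-action kinetics has equations $x_1'=-z(\theta x_1-\mu)$, $z'=z(\theta x_1-\mu)$. The controlled (union) system has equations $x_1'=f_1(x)-z(\theta x_1-\mu)$, $z'=z(\theta x_1-\mu)$, and $x_i'=f_i(x)$ for $i\ge 2$. A deterministic system is an ACR system if it admits a positive steady state and some species has the same value at every positive steady state (an ACR species). An ACR network system $(\hat{\mathcal S},\hat{\mathcal C},\hat{\mathcal R},\hat{\mathcal K})$ with $X_1\in\mathcal S\cap\hat{\mathcal S}$ and $\hat{\mathcal S}\setminus\mathcal S\ne\emptyset$ is called an ACR controller for $(\mathcal S,\mathcal C,\mathcal R,\mathcal K)$ if the union system (right-hand sides added on shared species) is an ACR network system with $X_1$ as an ACR species; it is a mass-action ACR controller if it is a mass-action system. *)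

theory Defs
  imports Complex_Main
begin

type_synonym 's complex = "'s \<Rightarrow> nat"

definition network_field ::
  "('s complex \<times> 's complex \<times> (('s \<Rightarrow> real) \<Rightarrow> real)) list
     \<Rightarrow> ('s \<Rightarrow> real) \<Rightarrow> ('s \<Rightarrow> real)" where
  "network_field R x = (\<lambda>s. sum_list (map (\<lambda>(y, y', kap). kap x * (real (y' s) - real (y s))) R))"

definition is_reaction_network_field :: "(('s \<Rightarrow> real) \<Rightarrow> ('s \<Rightarrow> real)) \<Rightarrow> bool" where
  "is_reaction_network_field f \<longleftrightarrow>
     (\<exists>R. (\<forall>(y, y', kap) \<in> set R. y \<noteq> y') \<and> f = network_field R)"

definition mass_action_field ::
  "('s::finite complex \<times> 's complex \<times> real) list \<Rightarrow> ('s \<Rightarrow> real) \<Rightarrow> ('s \<Rightarrow> real)" where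
  "mass_action_field R x =
     (\<lambda>s. sum_list (map (\<lambda>(y, y', k). k * (\<Prod>j\<in>UNIV. x j ^ y j) * (real (y' s) - real (y s))) R))"

definition positive_steady_states :: "(('s \<Rightarrow> real) \<Rightarrow> ('s \<Rightarrow> real)) \<Rightarrow> ('s \<Rightarrow> real) set" where
  "positive_steady_states f = {x. (\<forall>s. x s > 0) \<and> f x = (\<lambda>_. 0)}"

definition ACR_species :: "(('s \<Rightarrow> real) \<Rightarrow> ('s \<Rightarrow> real)) \<Rightarrow> 's \<Rightarrow> bool" where
  "ACR_species f s \<longleftrightarrow> (\<exists>c. \<forall>x \<in> positive_steady_states f. x s = c)"

definition is_ACR_system :: "(('s \<Rightarrow> real) \<Rightarrow> ('s \<Rightarrow> real)) \<Rightarrow> bool" where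
  "is_ACR_system f \<longleftrightarrow> positive_steady_states f \<noteq> {} \<and> (\<exists>s. ACR_species f s)"

definition unit_complex :: "'s \<Rightarrow> 's complex" where
  "unit_complex a = (\<lambda>s. if s = a then 1 else 0)"

definition basic_reactions :: "'s \<Rightarrow> 's \<Rightarrow> real \<Rightarrow> real \<Rightarrow> ('s complex \<times> 's complex \<times> real) list" where
  "basic_reactions x1 z theta mu =
     [(\<lambda>s. unit_complex z s + unit_complex x1 s, \<lambda>s. 2 * unit_complex z s, theta),
      (unit_complex z, unit_complex x1, mu)]"

text \<open>The controller as a network on its own two species.\<close>
datatype basic_species = X1c | Zc

instance basic_species :: finite
proof
  have "(UNIV :: basic_species set) = {X1c, Zc}" using basic_species.exhaust by auto
  then show "finite (UNIV :: basic_species set)" by (metis finite.emptyI finite.insertI)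
qed

text \<open>Union (controlled) system on species 's option: Some s are the original
  species, None is the new species Z.  Right-hand sides are added on shared species
  (only X1 = Some X1 is shared).\<close>
definition controlled_field ::
  "(('s::finite \<Rightarrow> real) \<Rightarrow> ('s \<Rightarrow> real)) \<Rightarrow> 's \<Rightarrow> real \<Rightarrow> real
     \<Rightarrow> ('s option \<Rightarrow> real) \<Rightarrow> ('s option \<Rightarrow> real)" where
  "controlled_field f X1 theta mu y =
     (\<lambda>sp. (case sp of None \<Rightarrow> 0 | Some s \<Rightarrow> f (\<lambda>j. y (Some j)) s)
           + mass_action_field (basic_reactions (Some X1) None theta mu) y sp)"

end

theory Submission
  imports Defs
begin

text \<open>The controller equation \<open>z' = z (\<theta> x\<^sub>1 - \<mu>)\<close> forces \<open>x\<^sub>1 = \<mu>/\<theta>\<close> at every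
  steady state with \<open>z > 0\<close>, whatever the controlled network is. Conversely, at a point with
  \<open>x\<^sub>1 = \<mu>/\<theta>\<close> both controller reactions are balanced, so a positive steady state of the
  original network with \<open>x\<^sub>1 = \<mu>/\<theta>\<close>, extended by any \<open>z > 0\<close>, is a positive steady
  state of the controlled system.\<close>

lemma prod_power_unit_complex:
  fixes x :: "'s::finite \<Rightarrow> 'a::comm_monoid_mult"
  shows "(\<Prod>j\<in>UNIV. x j ^ unit_complex a j) = x a"
proof -
  have "(\<Prod>j\<in>UNIV. x j ^ unit_complex a j) = (\<Prod>j\<in>UNIV. if j = a then x j else 1)"
    by (rule prod.cong) (auto simp: unit_complex_def)
  then show ?thesis by (simp add: prod.delta')
qed

lemma mass_action_field_basic_reactions:
  fixes a z :: "'s::finite"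
  assumes "a \<noteq> z"
  shows "mass_action_field (basic_reactions a z theta mu) x s =
    (if s = a then - (x z * (theta * x a - mu))
     else if s = z then x z * (theta * x a - mu) else 0)"
proof -
  have "(\<Prod>j\<in>UNIV. x j ^ (unit_complex z j + unit_complex a j)) = x z * x a"
    by (simp add: power_add prod.distrib prod_power_unit_complex)
  then show ?thesis
    using assms
    by (simp add: mass_action_field_def basic_reactions_def prod_power_unit_complex)
       (auto simp: unit_complex_def algebra_simps)
qed

lemma mass_action_field_basic_reactions_eq_0:
  assumes "a \<noteq> z" and "theta \<noteq> 0" and "x a = mu / theta"
  shows "mass_action_field (basic_reactions a z theta mu) x = (\<lambda>_. 0)"
  using assms by (simp add: fun_eq_iff mass_action_field_basic_reactions)

lemma controlled_field_None:
  "controlled_field f X1 theta mu y None = y None * (theta * y (Some X1) - mu)"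
  by (simp add: controlled_field_def mass_action_field_basic_reactions)

lemma positive_steady_states_component_eq:
  assumes field_z: "\<And>x. F x z = x z * (theta * x a - mu)" and "theta > 0"
    and "x \<in> positive_steady_states F"
  shows "x a = mu / theta"
proof -
  from assms(3) have "x z > 0" and "F x z = 0"
    by (auto simp: positive_steady_states_def)
  with field_z have "theta * x a - mu = 0" by simp
  with \<open>theta > 0\<close> show ?thesis by (simp add: field_simps)
qed

lemma ACR_species_if_controller_component:
  assumes "\<And>x. F x z = x z * (theta * x a - mu)" and "theta > 0"
  shows "ACR_species F a"
  unfolding ACR_species_def
  by (metis assms positive_steady_states_component_eq)

lemma controlled_field_positive_steady_state:
  assumes "xs \<in> positive_steady_states f" and "xs X1 = mu / theta"
    and "theta \<noteq> 0" and "c > 0"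
  shows "case_option c xs \<in> positive_steady_states (controlled_field f X1 theta mu)"
proof -
  have "mass_action_field (basic_reactions (Some X1) None theta mu) (case_option c xs) = (\<lambda>_. 0)"
    using assms(2,3) by (intro mass_action_field_basic_reactions_eq_0) simp_all
  moreover have "(\<lambda>j. case_option c xs (Some j)) = xs" by simp
  ultimately show ?thesis
    using assms(1,4)
    by (auto simp: positive_steady_states_def controlled_field_def fun_eq_iff split: option.split)
qed

theorem mainTheorem2:
  fixes f :: "('s::finite \<Rightarrow> real) \<Rightarrow> ('s \<Rightarrow> real)"
    and X1 :: 's and theta mu :: real
  assumes "is_reaction_network_field f"
    and "theta > 0" and "mu > 0"
    and "\<exists>xs \<in> positive_steady_states f. xs X1 = mu / theta"
  shows "is_ACR_system (mass_action_field (basic_reactions X1c Zc theta mu))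
       \<and> ACR_species (mass_action_field (basic_reactions X1c Zc theta mu)) X1c
       \<and> is_ACR_system (controlled_field f X1 theta mu)
       \<and> ACR_species (controlled_field f X1 theta mu) (Some X1)
       \<and> positive_steady_states (controlled_field f X1 theta mu) \<noteq> {}"
proof -
  let ?basic = "mass_action_field (basic_reactions X1c Zc theta mu)"
  let ?controlled = "controlled_field f X1 theta mu"
  obtain xs where xs: "xs \<in> positive_steady_states f" "xs X1 = mu / theta"
    using assms(4) by blast
  have "(\<lambda>s. if s = X1c then mu / theta else 1) \<in> positive_steady_states ?basic"
    using assms(2,3)
    by (auto simp: positive_steady_states_def fun_eq_iff mass_action_field_basic_reactions)
  moreover have "ACR_species ?basic X1c"
    using assms(2)
    by (intro ACR_species_if_controller_component[where z = Zc and theta = theta and mu = mu])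
       (simp add: mass_action_field_basic_reactions)
  moreover have "case_option 1 xs \<in> positive_steady_states ?controlled"
    using xs assms(2) by (intro controlled_field_positive_steady_state) simp_all
  moreover have "ACR_species ?controlled (Some X1)"
    using assms(2) by (intro ACR_species_if_controller_component[where z = None and theta = theta and mu = mu] controlled_field_None)
  ultimately show ?thesis
    unfolding is_ACR_system_def by blast
qed

end
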